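(* Let $A$ be a finite set of alternatives with $|A|\ge 3$, let $N=\{1,\dots,n\}$ with $n\ge 2$, and let $\mathbb{D}$ be a minimally rich and L-tops-only domain of linear orders over $A$. If $\mathbb{D}$ is connected with two distinct neighbours, then every unanimous and locally strategy-proof social choice function $f:\mathbb{D}^n\to A$ satisfies dictatorship.
   Context: A domain is a set $\mathbb{D}$ of linear orders (strict preferences) over $A$; a preference profile is $P=(P_1,\dots,P_n)\in\mathbb{D}^n$. For a linear order $P_i$, $r_k(P_i)$ is its $k$-th ranked alternative. $\mathbb{D}$ is minimally rich if every $a\in A$ is ranked first in some $P_i\in\mathbb{D}$. Two linear orders $P_i,P_i'$ are adjacent ($P_i\sim P_i'$) if $P_i'$ is obtained from $P_i$ by swapping two consecutively ranked alternatives and leaving all other ranks unchanged. A social choice function (scf) is a map $f:\mathbb{D}^n\to A$. It is unanimous if $f(P)=a$ whenever every voter ranks $a$ first. It is locally strategy-proof if there is no voter $i$, profile $P$, and $P_i'\in\mathbb{D}$ with $P_i'\sim P_i$ such that $f(P_i',P_{-i})\,P_i\,f(P_i,P_{-i})$. It satisfies dictatorship if there is a voter $i$ with $f(P)=r_1(P_i)$ for all $P\in\mathbb{D}^n$. It satisfies tops-onlyness if $f(P)=f(P')$ whenever $r_1(P_i)=r_1(P_i')$ for all $i$. $\mathbb{D}$ is L-tops-only if every unanimous and locally strategy-proof scf $f:\mathbb{D}^n\to A$ satisfies tops-onlyness. A path in $\mathbb{D}$ is a sequence of distinct preferences in $\mathbb{D}$ in which consecutive ones are adjacent; $\mathbb{D}$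 is connected if any two of its preferences are joined by a path in $\mathbb{D}$. For $\bar{\mathbb{D}}\subseteq\mathbb{D}$, a neighbour of $\bar{\mathbb{D}}$ in $\mathbb{D}$ is a $P_i\in\mathbb{D}\setminus\bar{\mathbb{D}}$ adjacent to some element of $\bar{\mathbb{D}}$. Two preferences $P_i,P_i'\in\mathbb{D}$ are top-connected in $\mathbb{D}$ if there is a path from $P_i$ to $P_i'$ in $\mathbb{D}$ all of whose members have the same top-ranked alternative. The top-connected closure $\mathbb{D}^{TCC}(P_i)$ is the set of preferences in $\mathbb{D}$ top-connected to $P_i$, together with $P_i$. $\mathbb{D}$ is connected with two distinct neighbours if (1) $\mathbb{D}$ is connected, and (2) for every $P_i\in\mathbb{D}$ there exist two neighbours $P_i',P_i''$ of $\mathbb{D}^{TCC}(P_i)$ in $\mathbb{D}$ with $r_1(P_i')\ne r_1(P_i'')$. *)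

theory Defs
  imports Main "HOL-Library.FuncSet"
begin

text \<open>A linear order (strict preference) over A is represented as the list of the
alternatives of A ranked from best to worst (a duplicate-free enumeration of A).
The k-th ranked alternative r_k(L) is L ! (k-1); the top r_1(L) is hd L.\<close>

definition linear_order_on :: "'a set \<Rightarrow> 'a list \<Rightarrow> bool" where
  "linear_order_on A L \<longleftrightarrow> distinct L \<and> set L = A"

definition top :: "'a list \<Rightarrow> 'a" where
  "top L = hd L"

definition pref :: "'a list \<Rightarrow> 'a \<Rightarrow> 'a \<Rightarrow> bool" where
  "pref L x y \<longleftrightarrow> (\<exists>i j. i < j \<and> j < length L \<and> L ! i = x \<and> L ! j = y)"

definition domain :: "'a set \<Rightarrow> 'a list set \<Rightarrow> bool" where
  "domain A D \<longleftrightarrow> D \<subseteq> {L. linear_order_on A L}"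

definition minimally_rich :: "'a set \<Rightarrow> 'a list set \<Rightarrow> bool" where
  "minimally_rich A D \<longleftrightarrow> (\<forall>a\<in>A. \<exists>L\<in>D. top L = a)"

definition adjacent :: "'a list \<Rightarrow> 'a list \<Rightarrow> bool" where
  "adjacent L L' \<longleftrightarrow>
     (\<exists>k. Suc k < length L \<and> L' = L[k := L ! Suc k, Suc k := L ! k])"

definition profiles :: "nat \<Rightarrow> 'a list set \<Rightarrow> (nat \<Rightarrow> 'a list) set" where
  "profiles n D = (\<Pi>\<^sub>E i\<in>{..<n}. D)"

definition scf :: "'a set \<Rightarrow> nat \<Rightarrow> 'a list set \<Rightarrow> ((nat \<Rightarrow> 'a list) \<Rightarrow> 'a) \<Rightarrow> bool" where
  "scf A n D f \<longleftrightarrow> (\<forall>P\<in>profiles n D. f P \<in> A)"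

definition unanimous :: "nat \<Rightarrow> 'a list set \<Rightarrow> ((nat \<Rightarrow> 'a list) \<Rightarrow> 'a) \<Rightarrow> bool" where
  "unanimous n D f \<longleftrightarrow>
     (\<forall>P\<in>profiles n D. \<forall>a. (\<forall>i<n. top (P i) = a) \<longrightarrow> f P = a)"

definition locally_strategy_proof ::
    "nat \<Rightarrow> 'a list set \<Rightarrow> ((nat \<Rightarrow> 'a list) \<Rightarrow> 'a) \<Rightarrow> bool" where
  "locally_strategy_proof n D f \<longleftrightarrow>
     \<not> (\<exists>i<n. \<exists>P\<in>profiles n D. \<exists>L'\<in>D.
          adjacent (P i) L' \<and> pref (P i) (f (P(i := L'))) (f P))"

definition dictatorial :: "nat \<Rightarrow> 'a list set \<Rightarrow> ((nat \<Rightarrow> 'a list) \<Rightarrow> 'a) \<Rightarrow> bool" where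
  "dictatorial n D f \<longleftrightarrow> (\<exists>i<n. \<forall>P\<in>profiles n D. f P = top (P i))"

definition tops_only :: "nat \<Rightarrow> 'a list set \<Rightarrow> ((nat \<Rightarrow> 'a list) \<Rightarrow> 'a) \<Rightarrow> bool" where
  "tops_only n D f \<longleftrightarrow>
     (\<forall>P\<in>profiles n D. \<forall>P'\<in>profiles n D.
        (\<forall>i<n. top (P i) = top (P' i)) \<longrightarrow> f P = f P')"

definition L_tops_only :: "'a set \<Rightarrow> nat \<Rightarrow> 'a list set \<Rightarrow> bool" where
  "L_tops_only A n D \<longleftrightarrow>
     (\<forall>f. scf A n D f \<and> unanimous n D f \<and> locally_strategy_proof n D f
          \<longrightarrow> tops_only n D f)"

definition path_in :: "'a list set \<Rightarrow> 'a list list \<Rightarrow> bool" where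
  "path_in D ps \<longleftrightarrow> ps \<noteq> [] \<and> distinct ps \<and> set ps \<subseteq> D \<and>
     (\<forall>k. Suc k < length ps \<longrightarrow> adjacent (ps ! k) (ps ! Suc k))"

definition connected_dom :: "'a list set \<Rightarrow> bool" where
  "connected_dom D \<longleftrightarrow>
     (\<forall>L\<in>D. \<forall>L'\<in>D. \<exists>ps. path_in D ps \<and> hd ps = L \<and> last ps = L')"

definition top_connected :: "'a list set \<Rightarrow> 'a list \<Rightarrow> 'a list \<Rightarrow> bool" where
  "top_connected D L L' \<longleftrightarrow>
     (\<exists>ps. path_in D ps \<and> hd ps = L \<and> last ps = L' \<and>
           (\<forall>Q\<in>set ps. top Q = top L))"

definition TCC :: "'a list set \<Rightarrow> 'a list \<Rightarrow> 'a list set" where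
  "TCC D L = {L'\<in>D. top_connected D L L'} \<union> {L}"

definition neighbour :: "'a list set \<Rightarrow> 'a list set \<Rightarrow> 'a list \<Rightarrow> bool" where
  "neighbour D S L \<longleftrightarrow> L \<in> D - S \<and> (\<exists>Q\<in>S. adjacent Q L)"

definition connected_two_neighbours :: "'a list set \<Rightarrow> bool" where
  "connected_two_neighbours D \<longleftrightarrow> connected_dom D \<and>
     (\<forall>L\<in>D. \<exists>L' L''. neighbour D (TCC D L) L' \<and> neighbour D (TCC D L) L'' \<and>
                      top L' \<noteq> top L'')"

end

theory Submission
  imports Defs
begin

text \<open>By tops-onlyness f is a rule on profiles of tops. Join two alternatives when they are the
  tops of two adjacent preferences of the domain: this graph is connected and every vertex has two
  distinct neighbours, and local strategy-proofness says that when one voter's top moves along an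
  edge, the outcome can only change from the old top to the new one. For two voters, a
  non-top outcome v, or a top v of voter 2 against which voter 1 wins with some but not all of
  its tops, would give v a veto for both voters on a component of the graph without v; such a
  double veto moves to the unique neighbour of v in that component and a strictly smaller
  component, which is absurd. Hence one voter is decisive at some profile, and the two
  neighbours of each vertex let decisiveness spread to all profiles. The case of n voters
  follows by induction, merging all voters but one into a single voter.\<close>

section \<open>Adjacent preferences and paths\<close>

lemma adjacent_sym:
  assumes "adjacent L L'"
  shows "adjacent L' L"
proof -
  obtain k where k: "Suc k < length L" and L': "L' = L[k := L ! Suc k, Suc k := L ! k]"
    using assms unfolding adjacent_def by blast
  have "L'[k := L' ! Suc k, Suc k := L' ! k] = L"
    using k by (intro nth_equalityI) (auto simp: L' nth_list_update)
  then show ?thesis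
    unfolding adjacent_def using k L' by (metis length_list_update)
qed

lemma adjacent_top_changed:
  assumes "adjacent L L'" and "top L \<noteq> top L'"
  shows "1 < length L \<and> L' = L[0 := L ! 1, 1 := L ! 0]"
proof -
  obtain k where k: "Suc k < length L" and L': "L' = L[k := L ! Suc k, Suc k := L ! k]"
    using assms(1) unfolding adjacent_def by blast
  have "k = 0"
  proof (rule ccontr)
    assume "k \<noteq> 0"
    then have "L' ! 0 = L ! 0" using k by (simp add: L' nth_list_update)
    moreover have "L \<noteq> []" "L' \<noteq> []" using k L' by auto
    ultimately have "top L' = top L" by (simp add: top_def hd_conv_nth)
    then show False using assms(2) by simp
  qed
  then show ?thesis using k L' by simp
qed

lemma pref_total:
  assumes "distinct L" "u \<in> set L" "v \<in> set L" "u \<noteq> v"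
  shows "pref L u v \<or> pref L v u"
proof -
  obtain i j where "i < length L" "L ! i = u" "j < length L" "L ! j = v"
    using assms(2,3) by (auto simp: in_set_conv_nth)
  moreover have "i < j \<or> j < i" using calculation assms(4) by (metis linorder_neqE_nat)
  ultimately show ?thesis unfolding pref_def by blast
qed

lemma pref_reversed_by_top_swap:
  assumes "distinct L" "1 < length L" "pref L u v" "pref (L[0 := L ! 1, 1 := L ! 0]) v u"
  shows "u = L ! 0 \<and> v = L ! 1"
proof -
  define \<sigma> :: "nat \<Rightarrow> nat" where "\<sigma> t = (if t = 0 then 1 else if t = 1 then 0 else t)" for t
  have swapped: "L[0 := L ! 1, 1 := L ! 0] ! t = L ! \<sigma> t" if "t < length L" for t
    by (cases L) (use that assms(2) in \<open>simp_all add: \<sigma>_def nth_list_update\<close>)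
  have \<sigma>_less: "\<sigma> t < length L" if "t < length L" for t
    using that assms(2) less_trans[OF zero_less_one assms(2)] by (simp add: \<sigma>_def)
  obtain i j where ij: "i < j" "j < length L" "L ! i = u" "L ! j = v"
    using assms(3) unfolding pref_def by blast
  obtain i' j' where ij': "i' < j'" "j' < length L"
      "L[0 := L ! 1, 1 := L ! 0] ! i' = v" "L[0 := L ! 1, 1 := L ! 0] ! j' = u"
    using assms(4) unfolding pref_def by auto
  have i'_less: "i' < length L" using ij' by simp
  have \<sigma>_ij': "L ! \<sigma> j' = L ! i" "L ! \<sigma> i' = L ! j"
    using ij ij' swapped[OF i'_less] swapped[OF ij'(2)] by simp_all
  moreover have "i < length L" "\<sigma> i' < length L" "\<sigma> j' < length L"
    using ij i'_less ij'(2) \<sigma>_less by simp_all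
  ultimately have "i = \<sigma> j'" "j = \<sigma> i'"
    using nth_eq_iff_index_eq[OF assms(1)] ij(2) by metis+
  then have "i' = 0 \<and> j' = 1"
    using ij(1) ij'(1) by (auto simp: \<sigma>_def split: if_splits)
  then show ?thesis using \<sigma>_ij' ij by (simp add: \<sigma>_def)
qed

text \<open>Local strategy-proofness, applied in both directions across a swap of the top pair,
  pins down the two outcomes.\<close>
lemma adjacent_top_change_outcomes:
  assumes "adjacent L L'" "top L \<noteq> top L'" "distinct L" "u \<in> set L" "v \<in> set L" "u \<noteq> v"
    and "\<not> pref L v u" "\<not> pref L' u v"
  shows "u = top L \<and> v = top L'"
proof -
  have len: "1 < length L" and L': "L' = L[0 := L ! 1, 1 := L ! 0]"
    using adjacent_top_changed[OF assms(1,2)] by auto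
  have "pref L u v" using pref_total[OF assms(3-6)] assms(7) by blast
  moreover have "distinct L'" "set L' = set L"
    using assms(3) len unfolding L' by (metis distinct_swap set_swap less_trans zero_less_one)+
  then have "pref L' v u" using pref_total[of L' u v] assms(4-6,8) by simp
  ultimately have "u = L ! 0 \<and> v = L ! 1"
    using pref_reversed_by_top_swap[OF assms(3) len] L' by blast
  moreover have "L ! 0 = hd L \<and> L ! 1 = hd L'"
    using len by (cases L) (auto simp: L' nth_list_update)
  ultimately show ?thesis by (simp add: top_def)
qed

lemma path_in_take:
  assumes "path_in D ps" "0 < m"
  shows "path_in D (take m ps)"
  using assms set_take_subset[of m ps] unfolding path_in_def by auto

lemma path_in_snoc:
  assumes "path_in D ps" "L \<in> D" "L \<notin> set ps" "adjacent (last ps) L"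
  shows "path_in D (ps @ [L])"
  unfolding path_in_def
proof (intro conjI allI impI)
  fix k assume k: "Suc k < length (ps @ [L])"
  show "adjacent ((ps @ [L]) ! k) ((ps @ [L]) ! Suc k)"
  proof (cases "Suc k < length ps")
    case True
    then show ?thesis using assms(1) unfolding path_in_def by (simp add: nth_append)
  next
    case False
    then have "k = length ps - 1" using k by simp
    then show ?thesis using assms(1,4) unfolding path_in_def by (simp add: nth_append last_conv_nth)
  qed
qed (use assms in \<open>auto simp: path_in_def\<close>)

lemma top_connected_refl: "L \<in> D \<Longrightarrow> top_connected D L L"
  unfolding top_connected_def path_in_def by (intro exI[of _ "[L]"]) simp

lemma top_connected_top:
  assumes "top_connected D L L'"
  shows "L' \<in> D \<and> top L' = top L"
proof -
  obtain ps where ps: "path_in D ps" "last ps = L'" "\<forall>Q\<in>set ps. top Q = top L"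
    using assms unfolding top_connected_def by blast
  then have "L' \<in> set ps" unfolding path_in_def by auto
  then show ?thesis using ps unfolding path_in_def by auto
qed

lemma top_connected_adjacent:
  assumes "top_connected D L Q" "adjacent Q L'" "L' \<in> D" "top L' = top L"
  shows "top_connected D L L'"
proof -
  obtain ps where ps: "path_in D ps" "hd ps = L" "last ps = Q" and tops: "\<forall>Q\<in>set ps. top Q = top L"
    using assms(1) unfolding top_connected_def by blast
  have ne: "ps \<noteq> []" using ps(1) unfolding path_in_def by blast
  show ?thesis
  proof (cases "L' \<in> set ps")
    case True
    then obtain j where j: "j < length ps" "ps ! j = L'" by (auto simp: in_set_conv_nth)
    have "path_in D (take (Suc j) ps)" using path_in_take[OF ps(1)] by simp
    moreover have "hd (take (Suc j) ps) = L" "last (take (Suc j) ps) = L'"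
      using ps(2) ne j by (simp_all add: last_conv_nth)
    moreover have "\<forall>Q\<in>set (take (Suc j) ps). top Q = top L"
      using tops set_take_subset by fast
    ultimately show ?thesis unfolding top_connected_def by blast
  next
    case False
    have "path_in D (ps @ [L'])" using path_in_snoc[OF ps(1) assms(3) False] ps(3) assms(2) by simp
    then show ?thesis
      unfolding top_connected_def using ps(2) ne tops assms(4) by (intro exI[of _ "ps @ [L']"]) auto
  qed
qed

lemma TCC_eq: "L \<in> D \<Longrightarrow> TCC D L = {L' \<in> D. top_connected D L L'}"
  unfolding TCC_def using top_connected_refl by blast

lemma neighbour_TCC:
  assumes "L \<in> D" "neighbour D (TCC D L) L'"
  shows "top L' \<noteq> top L \<and> (\<exists>Q\<in>D. top Q = top L \<and> adjacent Q L')"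
proof -
  obtain Q where Q: "top_connected D L Q" "adjacent Q L'" and L': "L' \<in> D" "L' \<notin> TCC D L"
    using assms unfolding neighbour_def TCC_eq[OF assms(1)] by blast
  have "top L' \<noteq> top L" using top_connected_adjacent[OF Q] L' TCC_eq[OF assms(1)] by blast
  then show ?thesis using top_connected_top[OF Q(1)] Q(2) by blast
qed

section \<open>Connected graphs in which every vertex has two neighbours\<close>

lemma rtranclp_exits_set:
  assumes "r\<^sup>*\<^sup>* a b" "a \<in> S" "b \<notin> S"
  shows "\<exists>c d. c \<in> S \<and> d \<notin> S \<and> r c d"
  using assms by (induction rule: rtranclp_induct) auto

locale connected_deg2_graph =
  fixes A :: "'a set" and E :: "'a \<Rightarrow> 'a \<Rightarrow> bool"
  assumes finite_vertices: "finite A"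
    and edge_vertices: "E a b \<Longrightarrow> a \<in> A \<and> b \<in> A"
    and edge_sym: "E a b \<Longrightarrow> E b a"
    and edge_irrefl: "\<not> E a a"
    and connected: "a \<in> A \<Longrightarrow> b \<in> A \<Longrightarrow> E\<^sup>*\<^sup>* a b"
    and two_neighbours: "a \<in> A \<Longrightarrow> \<exists>b c. E a b \<and> E a c \<and> b \<noteq> c"
begin

definition edge_avoiding :: "'a \<Rightarrow> 'a \<Rightarrow> 'a \<Rightarrow> bool" where
  "edge_avoiding p x y \<longleftrightarrow> E x y \<and> x \<noteq> p \<and> y \<noteq> p"

definition component_avoiding :: "'a \<Rightarrow> 'a \<Rightarrow> 'a set" where
  "component_avoiding p w = {c. (edge_avoiding p)\<^sup>*\<^sup>* w c}"

lemma edge_avoiding_rtranclp_sym: "(edge_avoiding p)\<^sup>*\<^sup>* a b \<Longrightarrow> (edge_avoiding p)\<^sup>*\<^sup>* b a"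
  by (metis edge_avoiding_def edge_sym sympD sympI symp_rtranclp)

lemma component_avoiding_self: "w \<in> component_avoiding p w"
  by (simp add: component_avoiding_def)

lemma component_avoiding_not_avoided:
  assumes "c \<in> component_avoiding p w" "w \<noteq> p"
  shows "c \<noteq> p"
proof -
  have "(edge_avoiding p)\<^sup>*\<^sup>* w c" using assms(1) by (simp add: component_avoiding_def)
  then show ?thesis by (induction rule: rtranclp_induct) (auto simp: edge_avoiding_def assms(2))
qed

lemma component_avoiding_vertices:
  assumes "c \<in> component_avoiding p w" "w \<in> A"
  shows "c \<in> A"
proof -
  have "(edge_avoiding p)\<^sup>*\<^sup>* w c" using assms(1) by (simp add: component_avoiding_def)
  then show ?thesis
    by (induction rule: rtranclp_induct) (auto simp: edge_avoiding_def assms(2) dest: edge_vertices)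
qed

lemma component_avoiding_edge:
  assumes "c \<in> component_avoiding p w" "E c d" "d \<noteq> p" "w \<noteq> p"
  shows "d \<in> component_avoiding p w"
proof -
  have "edge_avoiding p c d"
    using assms component_avoiding_not_avoided by (simp add: edge_avoiding_def)
  then show ?thesis using assms(1) by (simp add: component_avoiding_def)
qed

lemma component_avoiding_rtranclp:
  assumes "c \<in> component_avoiding p w" "d \<in> component_avoiding p w"
  shows "(edge_avoiding p)\<^sup>*\<^sup>* c d"
  using assms edge_avoiding_rtranclp_sym unfolding component_avoiding_def
  by (metis mem_Collect_eq rtranclp_trans)

lemma component_avoiding_reaches:
  assumes "w \<in> A" "p \<in> A" "w \<noteq> p"
  shows "\<exists>s\<in>component_avoiding p w. E s p"
proof -
  have "p \<notin> component_avoiding p w"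
    using component_avoiding_not_avoided assms(3) by blast
  then obtain c d where cd: "c \<in> component_avoiding p w" "d \<notin> component_avoiding p w" "E c d"
    using rtranclp_exits_set[OF connected[OF assms(1,2)] component_avoiding_self] by blast
  then have "d = p" using component_avoiding_edge assms(3) by blast
  then show ?thesis using cd by blast
qed

lemma rtranclp_edge_avoiding_other:
  assumes "(edge_avoiding y)\<^sup>*\<^sup>* w d" "c \<notin> component_avoiding y w"
  shows "(edge_avoiding c)\<^sup>*\<^sup>* w d"
  using assms(1)
proof (induction rule: rtranclp_induct)
  case (step b e)
  then have "b \<in> component_avoiding y w" "e \<in> component_avoiding y w"
    by (auto simp: component_avoiding_def)
  then have "edge_avoiding c b e" using step(2) assms(2) by (auto simp: edge_avoiding_def)
  then show ?case using step.IH by simp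
qed simp

lemma rtranclp_edge_avoiding_around:
  assumes "c' \<in> A" "y \<in> A" "c' \<noteq> y" "c \<noteq> y" "c \<notin> component_avoiding y c'"
  shows "(edge_avoiding c)\<^sup>*\<^sup>* c' y"
proof -
  obtain s where s: "s \<in> component_avoiding y c'" "E s y"
    using component_avoiding_reaches assms(1-3) by blast
  have "(edge_avoiding y)\<^sup>*\<^sup>* c' s" using s(1) by (simp add: component_avoiding_def)
  then have "(edge_avoiding c)\<^sup>*\<^sup>* c' s" using rtranclp_edge_avoiding_other assms(5) by blast
  moreover have "s \<noteq> c" using s(1) assms(5) by blast
  then have "edge_avoiding c s y" using s(2) assms(4) by (auto simp: edge_avoiding_def)
  ultimately show ?thesis by (rule rtranclp.rtrancl_into_rtrancl)
qed

lemma component_avoiding_cut: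
  assumes "w \<noteq> p" and u: "u \<in> component_avoiding p w"
    and only_u: "\<And>u'. u' \<in> component_avoiding p w \<Longrightarrow> E u' p \<Longrightarrow> u' = u"
    and w': "w' \<in> component_avoiding p w" "w' \<noteq> u"
  shows "component_avoiding u w' \<subseteq> component_avoiding p w - {u}"
proof
  fix c assume "c \<in> component_avoiding u w'"
  then have "(edge_avoiding u)\<^sup>*\<^sup>* w' c" by (simp add: component_avoiding_def)
  then show "c \<in> component_avoiding p w - {u}"
  proof (induction rule: rtranclp_induct)
    case (step b d)
    then have "E b d" "b \<noteq> u" "d \<noteq> u" by (auto simp: edge_avoiding_def)
    have "b \<in> component_avoiding p w" using step.IH by simp
    then have "d \<noteq> p" using only_u \<open>E b d\<close> \<open>b \<noteq> u\<close> by auto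
    then have "d \<in> component_avoiding p w"
      using component_avoiding_edge[OF \<open>b \<in> component_avoiding p w\<close> \<open>E b d\<close> _ assms(1)] by simp
    then show ?case using \<open>d \<noteq> u\<close> by simp
  qed (use w' in simp)
qed

end

section \<open>Two-voter rules\<close>

locale two_voter_rule = connected_deg2_graph +
  fixes k :: "'a \<Rightarrow> 'a \<Rightarrow> 'a"
  assumes unanimous: "a \<in> A \<Longrightarrow> k a a = a"
    and rule_vertices: "a \<in> A \<Longrightarrow> b \<in> A \<Longrightarrow> k a b \<in> A"
    and edge_sp_first: "E a a' \<Longrightarrow> b \<in> A \<Longrightarrow> k a b \<noteq> k a' b \<Longrightarrow> k a b = a \<and> k a' b = a'"
    and edge_sp_second: "E b b' \<Longrightarrow> a \<in> A \<Longrightarrow> k a b \<noteq> k a b' \<Longrightarrow> k a b = b \<and> k a b' = b'"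
begin

lemma two_voter_rule_swap: "two_voter_rule A E (\<lambda>a b. k b a)"
proof (rule two_voter_rule.intro)
  show "two_voter_rule_axioms A E (\<lambda>a b. k b a)"
    unfolding two_voter_rule_axioms_def
    using unanimous rule_vertices edge_sp_first edge_sp_second by blast
qed (rule connected_deg2_graph_axioms)

lemma edge_first_cases: "E a a' \<Longrightarrow> b \<in> A \<Longrightarrow> k a' b = k a b \<or> k a' b = a'"
  using edge_sp_first[of a a' b] by metis

lemma edge_second_cases: "E b b' \<Longrightarrow> a \<in> A \<Longrightarrow> k a b' = k a b \<or> k a b' = b'"
  using edge_sp_second[of b b' a] by metis

lemma edge_first_keep: "E a a' \<Longrightarrow> b \<in> A \<Longrightarrow> k a b \<noteq> a \<Longrightarrow> k a' b = k a b"
  using edge_sp_first[of a a' b] by metis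

lemma outcome_persists_first:
  assumes "(edge_avoiding v)\<^sup>*\<^sup>* c d" "k c y = v" "y \<in> A"
  shows "k d y = v"
  using assms(1)
proof (induction rule: rtranclp_induct)
  case (step b e)
  then show ?case using edge_first_keep[of b e y] assms(3) by (auto simp: edge_avoiding_def)
qed (use assms(2) in simp)

lemma outcome_persists_second:
  "(edge_avoiding v)\<^sup>*\<^sup>* c d \<Longrightarrow> k x c = v \<Longrightarrow> x \<in> A \<Longrightarrow> k x d = v"
  using two_voter_rule.outcome_persists_first[OF two_voter_rule_swap] by blast

lemma walk_to_outcome_first:
  assumes "E\<^sup>*\<^sup>* b t" "k b c = t" "c \<in> A"
  shows "k t c = t"
  using assms(1,2)
proof (induction rule: converse_rtranclp_induct)
  case (step b b')
  then show ?case using edge_first_keep[of b b' c] assms(3) by (cases "b = t") auto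
qed

lemma second_wins_beside_veto:
  assumes "w \<in> A" "w \<noteq> p" and veto: "\<forall>c\<in>component_avoiding p w. k c p = p"
    and u: "u \<in> component_avoiding p w" "E u p" and c: "c \<in> component_avoiding p w"
  shows "k c u = u"
proof (rule ccontr)
  assume "k c u \<noteq> u"
  have "c \<in> A" "u \<in> A" using c u(1) component_avoiding_vertices assms(1) by blast+
  then have "k c u = p" using edge_second_cases[OF edge_sym[OF u(2)]] veto c \<open>k c u \<noteq> u\<close> by force
  then have "k u u = p"
    using outcome_persists_first[OF component_avoiding_rtranclp[OF c u(1)]] \<open>u \<in> A\<close> by blast
  then show False
    using unanimous[OF \<open>u \<in> A\<close>] component_avoiding_not_avoided[OF u(1) assms(2)] by simp
qed

lemma first_wins_beside_veto:
  "w \<in> A \<Longrightarrow> w \<noteq> p \<Longrightarrow> \<forall>c\<in>component_avoiding p w. k p c = p \<Longrightarrow>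
    u \<in> component_avoiding p w \<Longrightarrow> E u p \<Longrightarrow> c \<in> component_avoiding p w \<Longrightarrow> k u c = u"
  using two_voter_rule.second_wins_beside_veto[OF two_voter_rule_swap] by blast

text \<open>Otherwise p has a unique neighbour u in the component, and u plays the role of p on a
  strictly smaller component.\<close>
lemma no_double_veto:
  assumes "p \<in> A" "w \<in> A" "w \<noteq> p"
    and "\<forall>c\<in>component_avoiding p w. k c p = p \<and> k p c = p"
  shows False
  using assms
proof (induction "card (component_avoiding p w)" arbitrary: p w rule: less_induct)
  case less
  let ?C = "component_avoiding p w"
  have CA: "?C \<subseteq> A" using component_avoiding_vertices less.prems(2) by blast
  obtain u where u: "u \<in> ?C" "E u p" using component_avoiding_reaches less.prems(1-3) by blast
  have wins: "k c u' = u' \<and> k u' c = u'" if "u' \<in> ?C" "E u' p" "c \<in> ?C" for u' c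
  proof -
    have "\<forall>c\<in>?C. k c p = p" "\<forall>c\<in>?C. k p c = p" using less.prems(4) by auto
    then show ?thesis
      using second_wins_beside_veto[OF less.prems(2,3) _ that]
        first_wins_beside_veto[OF less.prems(2,3) _ that]
      by blast
  qed
  have unique: "u' = u" if "u' \<in> ?C" "E u' p" for u'
    using wins[OF that u(1)] wins[OF u that(1)] by simp
  have uA: "u \<in> A" "u \<noteq> p" using CA u(1) component_avoiding_not_avoided less.prems(3) by auto
  obtain w' where w': "E u w'" "w' \<noteq> p" using two_neighbours[OF uA(1)] by blast
  have w'C: "w' \<in> ?C" using component_avoiding_edge[OF u(1) w' less.prems(3)] .
  have w'A: "w' \<in> A" "w' \<noteq> u" using edge_vertices[OF w'(1)] edge_irrefl w'(1) by auto
  have sub: "component_avoiding u w' \<subseteq> ?C - {u}"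
    using component_avoiding_cut[OF less.prems(3) u(1) unique w'C w'A(2)] by blast
  have "finite ?C" using CA finite_vertices finite_subset by blast
  moreover have "component_avoiding u w' \<subset> ?C" using sub u(1) by blast
  ultimately have "card (component_avoiding u w') < card ?C" by (simp add: psubset_card_mono)
  moreover have "\<forall>c\<in>component_avoiding u w'. k c u = u \<and> k u c = u"
    using wins[OF u] sub by blast
  ultimately show False using less.hyps[OF _ uA(1) w'A] by blast
qed

lemma non_top_outcome_vetoes_second:
  assumes "x \<in> A" "y \<in> A" "k x y = v"
    and u: "u \<in> component_avoiding v x" "E u v"
    and u': "u' \<in> component_avoiding v y" "E u' v"
    and vx: "v \<noteq> x" and uu': "u \<noteq> u'" and ku'u: "k u' u \<noteq> u'"
  shows "\<forall>c\<in>component_avoiding v y. k c v = v \<and> k v c = v"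
proof
  fix c assume c: "c \<in> component_avoiding v y"
  have vA: "v \<in> A" using rule_vertices[OF assms(1,2)] assms(3) by simp
  have cA: "c \<in> A" using component_avoiding_vertices[OF c assms(2)] .
  have uA: "u \<in> A" using component_avoiding_vertices[OF u(1) assms(1)] .
  have u'A: "u' \<in> A" using component_avoiding_vertices[OF u'(1) assms(2)] .
  have "u \<noteq> v" using component_avoiding_not_avoided[OF u(1)] vx by blast
  have "k u' v = v"
  proof (rule ccontr)
    assume "k u' v \<noteq> v"
    then have "k u' v = u'" using edge_second_cases[OF u'(2) u'A] unanimous[OF u'A] by simp
    then have "k u' u = u" using edge_second_cases[OF edge_sym[OF u(2)] u'A] ku'u by argo
    then show False
      using edge_second_cases[OF u(2) u'A] \<open>k u' v = u'\<close> \<open>k u' v \<noteq> v\<close> uu' by argo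
  qed
  then have "k c v = v"
    using outcome_persists_first[OF component_avoiding_rtranclp[OF u'(1) c] _ vA] by blast
  moreover have "k x c = v"
    using outcome_persists_second[OF _ assms(3) assms(1)] c by (simp add: component_avoiding_def)
  then have "k v c = v" using walk_to_outcome_first[OF connected[OF assms(1) vA] _ cA] by blast
  ultimately show "k c v = v \<and> k v c = v" by blast
qed

lemma outcome_is_top:
  assumes x: "x \<in> A" and y: "y \<in> A"
  shows "k x y = x \<or> k x y = y"
proof (rule ccontr)
  define v where "v = k x y"
  assume "\<not> (k x y = x \<or> k x y = y)"
  then have "v \<noteq> x" "v \<noteq> y" by (auto simp: v_def)
  have vA: "v \<in> A" using rule_vertices x y by (simp add: v_def)
  obtain u where u: "u \<in> component_avoiding v x" "E u v"
    using component_avoiding_reaches[OF x vA] \<open>v \<noteq> x\<close> by blast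
  obtain u' where u': "u' \<in> component_avoiding v y" "E u' v"
    using component_avoiding_reaches[OF y vA] \<open>v \<noteq> y\<close> by blast
  have "u \<noteq> u'"
  proof
    assume "u = u'"
    then have "(edge_avoiding v)\<^sup>*\<^sup>* u y"
      using component_avoiding_rtranclp[OF _ component_avoiding_self] u'(1) by blast
    then have "(edge_avoiding v)\<^sup>*\<^sup>* x y"
      using u(1) rtranclp_trans unfolding component_avoiding_def by fastforce
    then have "k y y = v" using outcome_persists_first y by (simp add: v_def)
    then show False using unanimous[OF y] \<open>v \<noteq> y\<close> by simp
  qed
  show False
  proof (cases "k u' u = u'")
    case False
    have "\<forall>c\<in>component_avoiding v y. k c v = v \<and> k v c = v"
      using non_top_outcome_vetoes_second[OF x y v_def[symmetric] u u' \<open>v \<noteq> x\<close> \<open>u \<noteq> u'\<close> False] .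
    then show False using no_double_veto[OF vA y] \<open>v \<noteq> y\<close> by blast
  next
    case True
    have "k x y = v" "u' \<noteq> u" "k u' u \<noteq> u" using v_def \<open>u \<noteq> u'\<close> True by auto
    then have "\<forall>c\<in>component_avoiding v x. k v c = v \<and> k c v = v"
      using two_voter_rule.non_top_outcome_vetoes_second[OF two_voter_rule_swap y x _ u' u]
        \<open>v \<noteq> y\<close> by blast
    then show False using no_double_veto[OF vA x] \<open>v \<noteq> x\<close> by blast
  qed
qed

lemma first_wins_along_avoiding:
  assumes "(edge_avoiding b)\<^sup>*\<^sup>* a d" "k a b = a" "b \<in> A"
  shows "k d b = d"
  using assms(1)
proof (induction rule: rtranclp_induct)
  case (step e d)
  then have "E e d" "e \<noteq> b" "e \<noteq> d" using edge_irrefl by (auto simp: edge_avoiding_def)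
  moreover have "d \<in> A" using edge_vertices \<open>E e d\<close> by blast
  ultimately show ?case
    using edge_first_cases[OF \<open>E e d\<close> assms(3)] outcome_is_top[OF _ assms(3), of d] step.IH
    by auto
qed (use assms(2) in simp)

text \<open>Otherwise voter 1 wins with some top c and loses with some top c'. Each of c, c' reaches y
  in the graph without the other, which makes y a double veto on the component of c'.\<close>
lemma column_dictator:
  assumes y: "y \<in> A"
  shows "(\<forall>a\<in>A. k a y = a) \<or> (\<forall>a\<in>A. k a y = y)"
proof (rule ccontr)
  assume "\<not> ?thesis"
  then obtain c c' where c: "c \<in> A" "k c y \<noteq> y" and c': "c' \<in> A" "k c' y \<noteq> c'"
    by blast
  have kc: "k c y = c" and kc': "k c' y = y" using outcome_is_top c c' y by blast+
  have "c \<noteq> y" "c' \<noteq> y" using c(2) c'(2) unanimous y by auto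
  have "c' \<notin> component_avoiding y c"
    using first_wins_along_avoiding[OF _ kc y] c'(2) by (auto simp: component_avoiding_def)
  then have to_y: "(edge_avoiding c')\<^sup>*\<^sup>* c y"
    using rtranclp_edge_avoiding_around[OF c(1) y \<open>c \<noteq> y\<close>] \<open>c' \<noteq> y\<close> by blast
  have "c \<notin> component_avoiding y c'"
    using outcome_persists_first[OF _ kc' y] c(2) by (auto simp: component_avoiding_def)
  then have "(edge_avoiding c)\<^sup>*\<^sup>* c' y"
    using rtranclp_edge_avoiding_around[OF c'(1) y \<open>c' \<noteq> y\<close>] \<open>c \<noteq> y\<close> by blast
  then have "(edge_avoiding c)\<^sup>*\<^sup>* y c'" by (rule edge_avoiding_rtranclp_sym)
  then have "k c c' = c" using outcome_persists_second kc c(1) by blast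
  then have kyc': "k y c' = y" using first_wins_along_avoiding[OF to_y _ c'(1)] by blast
  have "\<forall>z\<in>component_avoiding y c'. k z y = y \<and> k y z = y"
    using outcome_persists_first[OF _ kc' y] outcome_persists_second[OF _ kyc' y]
    by (auto simp: component_avoiding_def)
  then show False using no_double_veto[OF y c'(1) \<open>c' \<noteq> y\<close>] by blast
qed

lemma some_voter_decisive:
  assumes "A \<noteq> {}"
  shows "(\<exists>y\<in>A. \<forall>a\<in>A. k a y = a) \<or> (\<exists>x\<in>A. \<forall>b\<in>A. k x b = b)"
  using column_dictator assms by blast

end

section \<open>Rules on profiles of vertices\<close>

lemma PiE_upd: "x \<in> I \<rightarrow>\<^sub>E A \<Longrightarrow> i \<in> I \<Longrightarrow> b \<in> A \<Longrightarrow> x(i := b) \<in> I \<rightarrow>\<^sub>E A"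
  by (auto simp: PiE_iff extensional_def)

lemma PiE_Diff_upd: "z \<in> (I - {i}) \<rightarrow>\<^sub>E A \<Longrightarrow> i \<in> I \<Longrightarrow> b \<in> A \<Longrightarrow> z(i := b) \<in> I \<rightarrow>\<^sub>E A"
  by (auto simp: PiE_iff extensional_def)

definition unanimous_on :: "'a set \<Rightarrow> 'i set \<Rightarrow> (('i \<Rightarrow> 'a) \<Rightarrow> 'a) \<Rightarrow> bool" where
  "unanimous_on A I g \<longleftrightarrow> (\<forall>a\<in>A. g (\<lambda>i\<in>I. a) = a)"

definition edge_strategy_proof ::
    "'a set \<Rightarrow> ('a \<Rightarrow> 'a \<Rightarrow> bool) \<Rightarrow> 'i set \<Rightarrow> (('i \<Rightarrow> 'a) \<Rightarrow> 'a) \<Rightarrow> bool" where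
  "edge_strategy_proof A E I g \<longleftrightarrow>
     (\<forall>i\<in>I. \<forall>x\<in>I \<rightarrow>\<^sub>E A. \<forall>b. E (x i) b \<longrightarrow> g x \<noteq> g (x(i := b)) \<longrightarrow>
        g x = x i \<and> g (x(i := b)) = b)"

definition decisive_at :: "'a set \<Rightarrow> (('i \<Rightarrow> 'a) \<Rightarrow> 'a) \<Rightarrow> 'i \<Rightarrow> ('i \<Rightarrow> 'a) \<Rightarrow> bool" where
  "decisive_at A g i x \<longleftrightarrow> (\<forall>a\<in>A. g (x(i := a)) = a)"

lemma unanimous_on_fix_voter:
  assumes "i0 \<in> I" and "\<forall>b\<in>A. g (\<lambda>l\<in>I. if l = i0 then x0 else b) = b"
  shows "unanimous_on A (I - {i0}) (\<lambda>z. g (z(i0 := x0)))"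
proof -
  have "(\<lambda>l\<in>I - {i0}. a)(i0 := x0) = (\<lambda>l\<in>I. if l = i0 then x0 else a)" for a
    using assms(1) by (auto simp: fun_eq_iff)
  then show ?thesis using assms(2) by (simp add: unanimous_on_def)
qed

lemma unanimous_on_singleton:
  assumes "unanimous_on A {i} g" "x \<in> {i} \<rightarrow>\<^sub>E A"
  shows "g x = x i"
proof -
  have "(\<lambda>l\<in>{i}. x i) = x"
  proof
    fix l
    show "(\<lambda>l\<in>{i}. x i) l = x l" using PiE_arb[OF assms(2), of l] by (cases "l = i") auto
  qed
  moreover have "x i \<in> A" using assms(2) by auto
  ultimately show ?thesis using assms(1) unfolding unanimous_on_def by force
qed

lemma decisive_at_fix_voter:
  assumes "i0 \<in> I" "j \<in> I - {i0}" "x0 \<in> A"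
    and dict: "\<forall>z\<in>I - {i0} \<rightarrow>\<^sub>E A. g (z(i0 := x0)) = z j"
  shows "decisive_at A g j (\<lambda>l\<in>I. x0)"
  unfolding decisive_at_def
proof
  fix a assume "a \<in> A"
  then have "(\<lambda>l\<in>I - {i0}. x0)(j := a) \<in> I - {i0} \<rightarrow>\<^sub>E A"
    using PiE_upd[of "\<lambda>l\<in>I - {i0}. x0"] assms(2,3) by auto
  then have "g (((\<lambda>l\<in>I - {i0}. x0)(j := a))(i0 := x0)) = a" using dict by simp
  moreover have "((\<lambda>l\<in>I - {i0}. x0)(j := a))(i0 := x0) = (\<lambda>l\<in>I. x0)(j := a)"
    using assms(1,2) by (auto simp: fun_eq_iff)
  ultimately show "g ((\<lambda>l\<in>I. x0)(j := a)) = a" by simp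
qed

context connected_deg2_graph
begin

lemma edge_strategy_proofD:
  "edge_strategy_proof A E I g \<Longrightarrow> i \<in> I \<Longrightarrow> x \<in> I \<rightarrow>\<^sub>E A \<Longrightarrow> E (x i) b \<Longrightarrow>
    g x \<noteq> g (x(i := b)) \<Longrightarrow> g x = x i \<and> g (x(i := b)) = b"
  unfolding edge_strategy_proof_def by blast

text \<open>If voter i with top x j lost after j moves to c, moving i to any neighbour of x j
  would have to change the outcome to that neighbour, which forces the outcome to equal every
  neighbour of x j; but x j has two.\<close>
lemma decisive_at_edge:
  assumes "i \<in> I" "j \<in> I" "j \<noteq> i" and sp: "edge_strategy_proof A E I g" and x: "x \<in> I \<rightarrow>\<^sub>E A"
    and dec: "decisive_at A g i x" and c: "E (x j) c"
  shows "decisive_at A g i (x(j := c))"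
proof -
  have cA: "c \<in> A" and xjA: "x j \<in> A" using edge_vertices[OF c] by auto
  have other: "g (x(j := c, i := a)) = a" if "a \<in> A" "a \<noteq> x j" for a
  proof (rule ccontr)
    assume "g (x(j := c, i := a)) \<noteq> a"
    moreover have "g (x(i := a)) = a" using dec that(1) by (simp add: decisive_at_def)
    moreover have "x(j := c, i := a) = (x(i := a))(j := c)"
      using assms(3) by (simp add: fun_upd_twist)
    ultimately have "g (x(i := a)) = (x(i := a)) j"
      using edge_strategy_proofD[OF sp assms(2) PiE_upd[OF x assms(1) that(1)]] c assms(3) by auto
    then show False using that assms(3) \<open>g (x(i := a)) = a\<close> by simp
  qed
  have "g (x(j := c, i := x j)) = x j"
  proof (rule ccontr)
    let ?y = "x(j := c, i := x j)"
    assume ne: "g ?y \<noteq> x j"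
    have "g ?y = b" if b: "E (x j) b" for b
    proof (rule ccontr)
      assume "g ?y \<noteq> b"
      moreover have "g (?y(i := b)) = b"
        using other[of b] edge_vertices[OF b] edge_irrefl b by fastforce
      moreover have y: "?y \<in> I \<rightarrow>\<^sub>E A" using PiE_upd[OF PiE_upd[OF x assms(2) cA] assms(1) xjA] .
      ultimately have "g ?y = ?y i" using edge_strategy_proofD[OF sp assms(1) y] b by auto
      then show False using ne by simp
    qed
    then show False using two_neighbours[OF xjA] by metis
  qed
  then show ?thesis unfolding decisive_at_def using other by metis
qed

lemma decisive_at_walk:
  assumes "i \<in> I" "j \<in> I" "j \<noteq> i" "edge_strategy_proof A E I g" "x \<in> I \<rightarrow>\<^sub>E A"
    and "decisive_at A g i x" "E\<^sup>*\<^sup>* (x j) c"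
  shows "decisive_at A g i (x(j := c))"
  using assms(7)
proof (induction rule: rtranclp_induct)
  case base
  then show ?case using assms(6) by simp
next
  case (step b d)
  have "x(j := b) \<in> I \<rightarrow>\<^sub>E A" using PiE_upd[OF assms(5,2)] edge_vertices[OF step.hyps(2)] by blast
  moreover have "E ((x(j := b)) j) d" using step.hyps(2) by simp
  ultimately have "decisive_at A g i ((x(j := b))(j := d))"
    using decisive_at_edge[OF assms(1-4) _ step.IH] by blast
  then have "decisive_at A g i (x(j := d))" by simp
  then show ?case unfolding fun_upd_def .
qed

lemma decisive_at_everywhere:
  assumes "finite I" "i \<in> I" "edge_strategy_proof A E I g" "x \<in> I \<rightarrow>\<^sub>E A" "decisive_at A g i x"
    and x': "x' \<in> I \<rightarrow>\<^sub>E A"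
  shows "decisive_at A g i x'"
  using assms(4,5)
proof (induction "card {j \<in> I - {i}. x j \<noteq> x' j}" arbitrary: x rule: less_induct)
  case less
  show ?case
  proof (cases "{j \<in> I - {i}. x j \<noteq> x' j} = {}")
    case True
    have "x'(i := a) = x(i := a)" for a
    proof
      fix l
      show "(x'(i := a)) l = (x(i := a)) l"
        using True PiE_arb[OF x', of l] PiE_arb[OF less.prems(1), of l] by (cases "l \<in> I") auto
    qed
    then show ?thesis using less.prems(2) by (simp add: decisive_at_def)
  next
    case False
    then obtain j where j: "j \<in> I" "j \<noteq> i" "x j \<noteq> x' j" by blast
    let ?x1 = "x(j := x' j)"
    have "E\<^sup>*\<^sup>* (x j) (x' j)" using connected less.prems(1) x' j(1) by blast
    then have dec: "decisive_at A g i ?x1"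
      using decisive_at_walk[OF assms(2) j(1,2) assms(3) less.prems] by blast
    have mem: "?x1 \<in> I \<rightarrow>\<^sub>E A" using PiE_upd[OF less.prems(1) j(1)] x' j(1) by blast
    have "card {l \<in> I - {i}. ?x1 l \<noteq> x' l} < card {l \<in> I - {i}. x l \<noteq> x' l}"
    proof -
      have eq: "{l \<in> I - {i}. ?x1 l \<noteq> x' l} = {l \<in> I - {i}. x l \<noteq> x' l} - {j}" by auto
      have "finite {l \<in> I - {i}. x l \<noteq> x' l}" using assms(1) by simp
      moreover have "j \<in> {l \<in> I - {i}. x l \<noteq> x' l}" using j by simp
      ultimately show ?thesis unfolding eq by (rule card_Diff1_less)
    qed
    then show ?thesis using less.hyps mem dec by blast
  qed
qed

lemma dictator_if_decisive:
  assumes "finite I" "i \<in> I" "edge_strategy_proof A E I g" "x \<in> I \<rightarrow>\<^sub>E A" "decisive_at A g i x"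
  shows "\<forall>x'\<in>I \<rightarrow>\<^sub>E A. g x' = x' i"
proof
  fix x' assume x': "x' \<in> I \<rightarrow>\<^sub>E A"
  then have "g (x'(i := x' i)) = x' i"
    using decisive_at_everywhere[OF assms x'] PiE_mem[OF x' assms(2)]
    unfolding decisive_at_def by blast
  then show "g x' = x' i" by simp
qed

lemma edge_strategy_proof_coalition:
  assumes sp: "edge_strategy_proof A E I g" and x: "x \<in> I \<rightarrow>\<^sub>E A" and "finite S" "S \<subseteq> I"
    and "\<forall>l\<in>S. x l = b" and bb': "E b b'"
  shows "g x \<noteq> g (\<lambda>l. if l \<in> S then b' else x l) \<longrightarrow>
    g x = b \<and> g (\<lambda>l. if l \<in> S then b' else x l) = b'"
  using assms(3-5)
proof (induction S rule: finite_induct)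
  case (insert s S)
  let ?y = "\<lambda>l. if l \<in> S then b' else x l"
  have "b' \<in> A" "b \<noteq> b'" using edge_vertices[OF bb'] edge_irrefl bb' by auto
  then have "?y \<in> I \<rightarrow>\<^sub>E A" using x insert.prems by (auto simp: PiE_iff extensional_def)
  moreover have "?y s = b" "s \<in> I" using insert by auto
  moreover have "(\<lambda>l. if l \<in> insert s S then b' else x l) = ?y(s := b')" by auto
  ultimately have "g ?y \<noteq> g (\<lambda>l. if l \<in> insert s S then b' else x l) \<longrightarrow>
      g ?y = b \<and> g (\<lambda>l. if l \<in> insert s S then b' else x l) = b'"
    using edge_strategy_proofD[OF sp, of s ?y b'] bb' by auto
  moreover have "g x \<noteq> g ?y \<longrightarrow> g x = b \<and> g ?y = b'" using insert by blast
  ultimately show ?case using \<open>b \<noteq> b'\<close> by argo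
qed simp

lemma two_voter_rule_split:
  assumes "finite I" "i0 \<in> I" and un: "unanimous_on A I g" and sp: "edge_strategy_proof A E I g"
    and range: "g \<in> (I \<rightarrow>\<^sub>E A) \<rightarrow> A"
  shows "two_voter_rule A E (\<lambda>a b. g (\<lambda>l\<in>I. if l = i0 then a else b))"
proof -
  define x :: "'a \<Rightarrow> 'a \<Rightarrow> _" where "x a b = (\<lambda>l\<in>I. if l = i0 then a else b)" for a b
  have mem: "x a b \<in> I \<rightarrow>\<^sub>E A" if "a \<in> A" "b \<in> A" for a b
    using that by (auto simp: x_def)
  have "two_voter_rule A E (\<lambda>a b. g (x a b))"
  proof (rule two_voter_rule.intro[OF connected_deg2_graph_axioms],
      rule two_voter_rule_axioms.intro)
    show "g (x a a) = a" if "a \<in> A" for a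
      using un that unfolding unanimous_on_def x_def by simp
    show "g (x a b) \<in> A" if "a \<in> A" "b \<in> A" for a b
      using range mem[OF that] by blast
    show "g (x a b) = a \<and> g (x a' b) = a'"
      if "E a a'" "b \<in> A" "g (x a b) \<noteq> g (x a' b)" for a a' b
    proof -
      have "(x a b)(i0 := a') = x a' b" using assms(2) by (auto simp: x_def)
      moreover have "x a b i0 = a" using assms(2) by (simp add: x_def)
      ultimately show ?thesis
        using edge_strategy_proofD[OF sp assms(2) mem, of a b a'] edge_vertices that by auto
    qed
    show "g (x a b) = b \<and> g (x a b') = b'"
      if "E b b'" "a \<in> A" "g (x a b) \<noteq> g (x a b')" for a b b'
    proof -
      have "(\<lambda>l. if l \<in> I - {i0} then b' else x a b l) = x a b'" by (auto simp: x_def)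
      moreover have "\<forall>l\<in>I - {i0}. x a b l = b" by (simp add: x_def)
      ultimately show ?thesis
        using edge_strategy_proof_coalition[OF sp mem, of a b "I - {i0}" b b'] edge_vertices
          assms(1) that
        by auto
    qed
  qed
  then show ?thesis by (simp add: x_def)
qed

lemma edge_strategy_proof_fix_voter:
  assumes sp: "edge_strategy_proof A E I g" and "i0 \<in> I" "x0 \<in> A"
  shows "edge_strategy_proof A E (I - {i0}) (\<lambda>z. g (z(i0 := x0)))"
  unfolding edge_strategy_proof_def
proof (intro ballI allI impI)
  fix i z b
  assume i: "i \<in> I - {i0}" and z: "z \<in> I - {i0} \<rightarrow>\<^sub>E A" and b: "E (z i) b"
    and ne: "g (z(i0 := x0)) \<noteq> g ((z(i := b))(i0 := x0))"
  have "(z(i := b))(i0 := x0) = (z(i0 := x0))(i := b)" "(z(i0 := x0)) i = z i"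
    using i by (auto simp: fun_upd_twist)
  then show "g (z(i0 := x0)) = z i \<and> g ((z(i := b))(i0 := x0)) = b"
    using edge_strategy_proofD[OF sp _ PiE_Diff_upd[OF z assms(2,3)], of i b] i b ne by auto
qed

text \<open>Induction on the number of voters: split off a voter i0 and view the rule as a two-voter
  rule between i0 and the coalition of all others. Either i0 is decisive, or the coalition is
  decisive at some top x0 of i0, and then fixing i0 at x0 leaves a rule on fewer voters.\<close>
theorem dictator_exists:
  assumes "finite I" "I \<noteq> {}" "A \<noteq> {}" "unanimous_on A I g" "edge_strategy_proof A E I g"
    and "g \<in> (I \<rightarrow>\<^sub>E A) \<rightarrow> A"
  shows "\<exists>i\<in>I. \<forall>x\<in>I \<rightarrow>\<^sub>E A. g x = x i"
  using assms
proof (induction "card I" arbitrary: I g rule: less_induct)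
  case less
  note fin = less.prems(1) and un = less.prems(4) and sp = less.prems(5) and range = less.prems(6)
  obtain i0 where i0: "i0 \<in> I" using less.prems(2) by blast
  consider (first) y where "y \<in> A" "\<forall>a\<in>A. g (\<lambda>l\<in>I. if l = i0 then a else y) = a"
    | (second) x0 where "x0 \<in> A" "\<forall>b\<in>A. g (\<lambda>l\<in>I. if l = i0 then x0 else b) = b"
    using two_voter_rule.some_voter_decisive[OF two_voter_rule_split[OF fin i0 un sp range]
        less.prems(3)]
    by blast
  then show ?case
  proof cases
    case first
    have "(\<lambda>l\<in>I. y)(i0 := a) = (\<lambda>l\<in>I. if l = i0 then a else y)" for a
      using i0 by (auto simp: fun_eq_iff)
    then have "decisive_at A g i0 (\<lambda>l\<in>I. y)" using first(2) by (simp add: decisive_at_def)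
    moreover have "(\<lambda>l\<in>I. y) \<in> I \<rightarrow>\<^sub>E A" using first(1) by auto
    ultimately show ?thesis using dictator_if_decisive[OF fin i0 sp] i0 by blast
  next
    case second
    show ?thesis
    proof (cases "I = {i0}")
      case True
      then show ?thesis using unanimous_on_singleton[of A i0 g] un i0 by blast
    next
      case False
      let ?g' = "\<lambda>z. g (z(i0 := x0))"
      have "card (I - {i0}) < card I" using card_Diff1_less[OF fin i0] .
      moreover have "finite (I - {i0})" "I - {i0} \<noteq> {}" using fin False i0 by auto
      moreover have "?g' \<in> (I - {i0} \<rightarrow>\<^sub>E A) \<rightarrow> A"
        using range PiE_Diff_upd[OF _ i0 second(1)] by blast
      ultimately obtain j where j: "j \<in> I - {i0}" and dict: "\<forall>z\<in>I - {i0} \<rightarrow>\<^sub>E A. ?g' z = z j"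
        using less.hyps[OF _ _ _ less.prems(3) unanimous_on_fix_voter[OF i0 second(2)]
            edge_strategy_proof_fix_voter[OF sp i0 second(1)]]
        by blast
      moreover have "(\<lambda>l\<in>I. x0) \<in> I \<rightarrow>\<^sub>E A" using second(1) by auto
      ultimately show ?thesis
        using dictator_if_decisive[OF fin _ sp] decisive_at_fix_voter[OF i0 j second(1) dict]
        by blast
    qed
  qed
qed

end

section \<open>The graph of tops of a domain\<close>

definition tops_adjacent :: "'a list set \<Rightarrow> 'a \<Rightarrow> 'a \<Rightarrow> bool" where
  "tops_adjacent D a b \<longleftrightarrow>
     a \<noteq> b \<and> (\<exists>L\<in>D. \<exists>L'\<in>D. adjacent L L' \<and> top L = a \<and> top L' = b)"

definition top_rep :: "'a list set \<Rightarrow> 'a \<Rightarrow> 'a list" where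
  "top_rep D a = (SOME L. L \<in> D \<and> top L = a)"

definition tops_rule ::
    "nat \<Rightarrow> 'a list set \<Rightarrow> ((nat \<Rightarrow> 'a list) \<Rightarrow> 'a) \<Rightarrow> (nat \<Rightarrow> 'a) \<Rightarrow> 'a" where
  "tops_rule n D f x = f (\<lambda>i\<in>{..<n}. top_rep D (x i))"

lemma domain_top:
  assumes "domain A D" "A \<noteq> {}" "L \<in> D"
  shows "top L \<in> A"
proof -
  have "set L = A" using assms(1,3) unfolding domain_def linear_order_on_def by blast
  moreover have "L \<noteq> []" using calculation assms(2) by auto
  ultimately show ?thesis unfolding top_def using hd_in_set by blast
qed

lemma top_rep:
  assumes "minimally_rich A D" "a \<in> A"
  shows "top_rep D a \<in> D \<and> top (top_rep D a) = a"
proof -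
  obtain L where "L \<in> D \<and> top L = a" using assms unfolding minimally_rich_def by blast
  then show ?thesis unfolding top_rep_def by (rule someI)
qed

lemma path_in_tops_adjacent:
  assumes "path_in D ps"
  shows "(tops_adjacent D)\<^sup>*\<^sup>* (top (hd ps)) (top (last ps))"
proof -
  have "(tops_adjacent D)\<^sup>*\<^sup>* (top (ps ! 0)) (top (ps ! m))" if "m < length ps" for m
    using that
  proof (induction m)
    case (Suc m)
    then have IH: "(tops_adjacent D)\<^sup>*\<^sup>* (top (ps ! 0)) (top (ps ! m))" by simp
    have "adjacent (ps ! m) (ps ! Suc m)" "ps ! m \<in> D" "ps ! Suc m \<in> D"
      using assms Suc.prems unfolding path_in_def by auto
    then have "top (ps ! m) = top (ps ! Suc m) \<or> tops_adjacent D (top (ps ! m)) (top (ps ! Suc m))"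
      unfolding tops_adjacent_def by blast
    then show ?case
    proof
      assume "tops_adjacent D (top (ps ! m)) (top (ps ! Suc m))"
      then show ?case using IH by (rule rtranclp.rtrancl_into_rtrancl[rotated])
    qed (use IH in simp)
  qed simp
  moreover have "ps \<noteq> []" using assms unfolding path_in_def by blast
  ultimately show ?thesis by (simp add: hd_conv_nth last_conv_nth)
qed

lemma connected_deg2_graph_tops_adjacent:
  assumes "finite A" "A \<noteq> {}" "domain A D" "minimally_rich A D" "connected_two_neighbours D"
  shows "connected_deg2_graph A (tops_adjacent D)"
proof
  show "a \<in> A \<and> b \<in> A" if "tops_adjacent D a b" for a b
    using that domain_top[OF assms(3,2)] unfolding tops_adjacent_def by blast
  show "tops_adjacent D b a" if "tops_adjacent D a b" for a b
    using that adjacent_sym unfolding tops_adjacent_def by blast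
  show "(tops_adjacent D)\<^sup>*\<^sup>* a b" if "a \<in> A" "b \<in> A" for a b
  proof -
    have a: "top_rep D a \<in> D" "top (top_rep D a) = a"
      and b: "top_rep D b \<in> D" "top (top_rep D b) = b"
      using top_rep[OF assms(4)] that by auto
    then obtain ps where "path_in D ps" "hd ps = top_rep D a" "last ps = top_rep D b"
      using assms(5) unfolding connected_two_neighbours_def connected_dom_def by blast
    then show ?thesis using path_in_tops_adjacent[of D ps] a(2) b(2) by simp
  qed
  show "\<exists>b c. tops_adjacent D a b \<and> tops_adjacent D a c \<and> b \<noteq> c" if "a \<in> A" for a
  proof -
    have L: "top_rep D a \<in> D" "top (top_rep D a) = a" using top_rep[OF assms(4) that] by auto
    have edge: "tops_adjacent D a (top L')" if "neighbour D (TCC D (top_rep D a)) L'" for L'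
    proof -
      have "L' \<in> D" using that unfolding neighbour_def by blast
      then show ?thesis using neighbour_TCC[OF L(1) that] L(2) unfolding tops_adjacent_def by auto
    qed
    obtain L' L'' where "neighbour D (TCC D (top_rep D a)) L'"
      and "neighbour D (TCC D (top_rep D a)) L''" and "top L' \<noteq> top L''"
      using assms(5) L(1) unfolding connected_two_neighbours_def by blast
    then show ?thesis using edge by blast
  qed
qed (use assms(1) in \<open>auto simp: tops_adjacent_def\<close>)

lemma rep_profile:
  assumes "minimally_rich A D" "x \<in> {..<n} \<rightarrow>\<^sub>E A"
  shows "(\<lambda>i\<in>{..<n}. top_rep D (x i)) \<in> profiles n D"
  using assms top_rep unfolding profiles_def by fastforce

lemma tops_of_profile:
  assumes "domain A D" "A \<noteq> {}" "P \<in> profiles n D"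
  shows "(\<lambda>i\<in>{..<n}. top (P i)) \<in> {..<n} \<rightarrow>\<^sub>E A"
  using assms domain_top unfolding profiles_def by fastforce

lemma tops_rule_tops:
  assumes "tops_only n D f" "domain A D" "A \<noteq> {}" "minimally_rich A D" "P \<in> profiles n D"
  shows "f P = tops_rule n D f (\<lambda>i\<in>{..<n}. top (P i))"
proof -
  let ?x = "\<lambda>i\<in>{..<n}. top (P i)"
  have x: "?x \<in> {..<n} \<rightarrow>\<^sub>E A" using tops_of_profile[OF assms(2,3,5)] .
  then have "(\<lambda>i\<in>{..<n}. top_rep D (?x i)) \<in> profiles n D" by (rule rep_profile[OF assms(4)])
  moreover have "\<forall>i<n. top (P i) = top ((\<lambda>i\<in>{..<n}. top_rep D (?x i)) i)"
  proof (intro allI impI)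
    fix i assume "i < n"
    then have "top (P i) \<in> A" using PiE_mem[OF x, of i] by simp
    then show "top (P i) = top ((\<lambda>i\<in>{..<n}. top_rep D (?x i)) i)"
      using top_rep[OF assms(4)] \<open>i < n\<close> by simp
  qed
  ultimately have "f P = f (\<lambda>i\<in>{..<n}. top_rep D (?x i))"
    using assms(1,5) unfolding tops_only_def by blast
  then show ?thesis unfolding tops_rule_def .
qed

lemma tops_rule_range:
  assumes "scf A n D f" "minimally_rich A D"
  shows "tops_rule n D f \<in> ({..<n} \<rightarrow>\<^sub>E A) \<rightarrow> A"
  using assms(1) rep_profile[OF assms(2)] unfolding scf_def tops_rule_def by blast

lemma tops_rule_unanimous:
  assumes "unanimous n D f" "minimally_rich A D"
  shows "unanimous_on A {..<n} (tops_rule n D f)"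
  unfolding unanimous_on_def
proof
  fix a assume "a \<in> A"
  then have "(\<lambda>i\<in>{..<n}. a) \<in> {..<n} \<rightarrow>\<^sub>E A" by simp
  then have "(\<lambda>i\<in>{..<n}. top_rep D ((\<lambda>i\<in>{..<n}. a) i)) \<in> profiles n D"
    by (rule rep_profile[OF assms(2)])
  moreover have "\<forall>i<n. top ((\<lambda>i\<in>{..<n}. top_rep D ((\<lambda>i\<in>{..<n}. a) i)) i) = a"
    using top_rep[OF assms(2) \<open>a \<in> A\<close>] by simp
  ultimately show "tops_rule n D f (\<lambda>i\<in>{..<n}. a) = a"
    using assms(1) unfolding unanimous_def tops_rule_def by blast
qed

lemma rep_profile_upd:
  assumes "minimally_rich A D" "x \<in> {..<n} \<rightarrow>\<^sub>E A" "i < n" "L \<in> D"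
  shows "(\<lambda>j\<in>{..<n}. top_rep D (x j))(i := L) \<in> profiles n D"
  using PiE_upd[OF rep_profile[OF assms(1,2), unfolded profiles_def] _ assms(4)] assms(3)
  unfolding profiles_def by simp

lemma tops_rule_rep_upd:
  assumes "tops_only n D f" "domain A D" "A \<noteq> {}" "minimally_rich A D"
    and x: "x \<in> {..<n} \<rightarrow>\<^sub>E A" and "i < n" "L \<in> D"
  shows "f ((\<lambda>j\<in>{..<n}. top_rep D (x j))(i := L)) = tops_rule n D f (x(i := top L))"
proof -
  let ?P = "(\<lambda>j\<in>{..<n}. top_rep D (x j))(i := L)"
  have "(\<lambda>j\<in>{..<n}. top (?P j)) = x(i := top L)"
  proof
    fix j
    show "(\<lambda>j\<in>{..<n}. top (?P j)) j = (x(i := top L)) j"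
      using top_rep[OF assms(4) PiE_mem[OF x]] PiE_arb[OF x, of j] assms(6) by auto
  qed
  then show ?thesis
    using tops_rule_tops[OF assms(1-4) rep_profile_upd[OF assms(4) x assms(6,7)]] by simp
qed

lemma tops_rule_edge_strategy_proof:
  assumes "scf A n D f" "locally_strategy_proof n D f" "tops_only n D f" "domain A D" "A \<noteq> {}"
    and "minimally_rich A D"
  shows "edge_strategy_proof A (tops_adjacent D) {..<n} (tops_rule n D f)"
  unfolding edge_strategy_proof_def
proof (intro ballI allI impI)
  fix i x b
  assume i: "i \<in> {..<n}" and x: "x \<in> {..<n} \<rightarrow>\<^sub>E A" and b: "tops_adjacent D (x i) b"
    and ne: "tops_rule n D f x \<noteq> tops_rule n D f (x(i := b))"
  obtain L L' where L: "L \<in> D" "top L = x i" and L': "L' \<in> D" "top L' = b" and adj: "adjacent L L'"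
    using b unfolding tops_adjacent_def by blast
  have i': "i < n" using i by simp
  let ?P = "\<lambda>j\<in>{..<n}. top_rep D (x j)"
  have "f (?P(i := L)) = tops_rule n D f (x(i := top L))"
    by (rule tops_rule_rep_upd[OF assms(3-6) x i' L(1)])
  then have f: "f (?P(i := L)) = tops_rule n D f x" using L(2) by simp
  have f': "f (?P(i := L')) = tops_rule n D f (x(i := b))"
    using tops_rule_rep_upd[OF assms(3-6) x i' L'(1)] L'(2) by simp
  have lsp: "\<not> pref (P i) (f (P(i := M))) (f P)"
    if "P \<in> profiles n D" "M \<in> D" "adjacent (P i) M" for P M
    using assms(2) that i' unfolding locally_strategy_proof_def by blast
  have "\<not> pref L (f (?P(i := L'))) (f (?P(i := L)))"
    using lsp[OF rep_profile_upd[OF assms(6) x i' L(1)] L'(1)] adj by simp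
  moreover have "\<not> pref L' (f (?P(i := L))) (f (?P(i := L')))"
    using lsp[OF rep_profile_upd[OF assms(6) x i' L'(1)] L(1)] adjacent_sym[OF adj] by simp
  moreover have "distinct L" "set L = A"
    using assms(4) L(1) unfolding domain_def linear_order_on_def by auto
  moreover have "tops_rule n D f x \<in> A" "tops_rule n D f (x(i := b)) \<in> A"
    using tops_rule_range[OF assms(1,6)] x PiE_upd[OF x i] domain_top[OF assms(4,5) L'(1)] L'(2)
    by auto
  moreover have "top L \<noteq> top L'" using b L(2) L'(2) unfolding tops_adjacent_def by simp
  ultimately have "f (?P(i := L)) = top L \<and> f (?P(i := L')) = top L'"
    using adjacent_top_change_outcomes[OF adj] ne f f' by simp
  then show "tops_rule n D f x = x i \<and> tops_rule n D f (x(i := b)) = b"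
    using f f' L(2) L'(2) by simp
qed

theorem theorem2:
  fixes A :: "'a set" and n :: nat and D :: "'a list set"
    and f :: "(nat \<Rightarrow> 'a list) \<Rightarrow> 'a"
  assumes "finite A" and "card A \<ge> 3" and "n \<ge> 2"
    and "domain A D" and "minimally_rich A D" and "L_tops_only A n D"
    and "connected_two_neighbours D"
    and "scf A n D f" and "unanimous n D f" and "locally_strategy_proof n D f"
  shows "dictatorial n D f"
proof -
  have "A \<noteq> {}" using assms(2) by auto
  interpret connected_deg2_graph A "tops_adjacent D"
    using connected_deg2_graph_tops_adjacent[OF assms(1) \<open>A \<noteq> {}\<close> assms(4,5,7)] .
  have tops_only: "tops_only n D f" using assms(6,8-10) unfolding L_tops_only_def by blast
  obtain i where i: "i \<in> {..<n}" and dict: "\<forall>x\<in>{..<n} \<rightarrow>\<^sub>E A. tops_rule n D f x = x i"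
    using dictator_exists[OF _ _ \<open>A \<noteq> {}\<close> tops_rule_unanimous[OF assms(9,5)]
        tops_rule_edge_strategy_proof[OF assms(8,10) tops_only assms(4) \<open>A \<noteq> {}\<close> assms(5)]
        tops_rule_range[OF assms(8,5)]] assms(3)
    by fastforce
  have "f P = top (P i)" if "P \<in> profiles n D" for P
    using tops_rule_tops[OF tops_only assms(4) \<open>A \<noteq> {}\<close> assms(5) that]
      dict tops_of_profile[OF assms(4) \<open>A \<noteq> {}\<close> that] i by simp
  then show ?thesis unfolding dictatorial_def using i by blast
qed

end
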